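(* Fix the data $N\ge 1$, $\hat s\in\{0,1\}^N$, $\hat y\in\{0,1\}^N$, $p\in\mathbb{R}_{\ge 0}^N$ and $\epsilon\ge 0$, and let $\mathcal{RC}$ and $\mathcal{RC}_\mathcal{E}$ be the two optimization problems defined in the context. Then the two problems have the same optimal solutions, in the following sense: (i) $\mathcal{RC}$ is feasible if and only if $\mathcal{RC}_\mathcal{E}$ is feasible, and in that case their optimal objective values coincide; (ii) for every optimal solution $(s_{01}^+,s_{10}^+,s_{01}^-,s_{10}^-)$ of $\mathcal{RC}_\mathcal{E}$, every vector $s^*$ obtained from it by the post-processing $\Phi$ is an optimal solution of $\mathcal{RC}$; (iii) every optimal solution $s^*$ of $\mathcal{RC}$ is obtained by the post-processing $\Phi$ from some optimal solution of $\mathcal{RC}_\mathcal{E}$ (namely from the tuple counting, in each of the four groups, how many entries of $\hat s$ were flipped in $s^*$).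
   Context: Data: an integer $N\ge1$; an initial guess $\hat s=(\hat s_1,\dots,\hat s_N)\in\{0,1\}^N$ of a binary sensitive attribute; predictions $\hat y=(\hat y_1,\dots,\hat y_N)\in\{0,1\}^N$; confidence weights $p=(p_1,\dots,p_N)$ with $p_i\ge0$; a tolerance $\epsilon\ge0$. Let $\bar y=\frac1N\sum_{i=1}^N\hat y_i$. Problem $\mathcal{RC}$ (general model): variables $s^*=(s^*_1,\dots,s^*_N)\in\{0,1\}^N$; minimize $\sum_{i=1}^N p_i(1-\hat s_i)s^*_i+\sum_{i=1}^N p_i\hat s_i(1-s^*_i)$ subject to $\sum_i s^*_i>0$, $\sum_i(1-s^*_i)>0$, $-\epsilon\le \bar y-\frac{\sum_i \hat y_i s^*_i}{\sum_i s^*_i}\le\epsilon$ and $-\epsilon\le \bar y-\frac{\sum_i \hat y_i (1-s^*_i)}{\sum_i (1-s^*_i)}\le\epsilon$ (statistical parity constraints). Four groups of indices: $G_1^+=\{i:\hat s_i=1,\hat y_i=1\}$, $G_0^+=\{i:\hat s_i=0,\hat y_i=1\}$, $G_1^-=\{i:\hat s_i=1,\hat y_i=0\}$, $G_0^-=\{i:\hat s_i=0,\hat y_i=0\}$, with cardinalities $n_1^+,n_0^+,n_1^-,n_0^-$. For each group $G$ with $|G|=n$, define the array $T_G[k]$ for $k=0,\dots,n$ as the sum of the $k$ smallest values among $\{p_i:i\in G\}$ (so $T_G[0]=0$); write $T_{1^+},T_{0^+},T_{1^-},T_{0^-}$. Problem $\mathcal{RC}_\mathcal{E}$ (efficient model):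 integer variables $s_{01}^+\in[0,n_0^+]$, $s_{10}^+\in[0,n_1^+]$, $s_{01}^-\in[0,n_0^-]$, $s_{10}^-\in[0,n_1^-]$; minimize $T_{0^+}[s_{01}^+]+T_{1^+}[s_{10}^+]+T_{0^-}[s_{01}^-]+T_{1^-}[s_{10}^-]$ subject to $n_0^++n_0^--s_{01}^+-s_{01}^-+s_{10}^++s_{10}^->0$, $n_1^++n_1^--s_{10}^+-s_{10}^-+s_{01}^++s_{01}^->0$, $-\epsilon\le\bar y-\frac{n_1^+-s_{10}^++s_{01}^+}{n_1^++n_1^--s_{10}^+-s_{10}^-+s_{01}^++s_{01}^-}\le\epsilon$, $-\epsilon\le\bar y-\frac{n_0^+-s_{01}^++s_{10}^+}{n_0^++n_0^--s_{01}^+-s_{01}^-+s_{10}^++s_{10}^-}\le\epsilon$. Post-processing $\Phi$: given a tuple $(s_{01}^+,s_{10}^+,s_{01}^-,s_{10}^-)$, obtain $s^*$ from $\hat s$ by flipping (changing $\hat s_i$ to $1-\hat s_i$) exactly $s_{01}^+$ indices of $G_0^+$, $s_{10}^+$ of $G_1^+$, $s_{01}^-$ of $G_0^-$ and $s_{10}^-$ of $G_1^-$, where in each group the flipped indices are ones with the smallest confidence values $p_i$ (ties broken arbitrarily, so the flipped set's total weight in group $G$ with $k$ flips equals $T_G[k]$); all other entries keep their value $\hat s_i$. *)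

theory Defs
  imports Complex_Main
begin

text \<open>Vectors in {0,1}^N are bool lists of length N (True = 1); the confidence
weights are a real list of length N; indices are 0..N-1.\<close>

definition ybar :: "nat \<Rightarrow> bool list \<Rightarrow> real" where
  "ybar N yh = (\<Sum>i<N. of_bool (yh ! i)) / real N"

definition RC_obj :: "nat \<Rightarrow> real list \<Rightarrow> bool list \<Rightarrow> bool list \<Rightarrow> real" where
  "RC_obj N p sh s =
     (\<Sum>i<N. p ! i * (1 - of_bool (sh ! i)) * of_bool (s ! i))
   + (\<Sum>i<N. p ! i * of_bool (sh ! i) * (1 - of_bool (s ! i)))"

definition RC_feasible :: "nat \<Rightarrow> bool list \<Rightarrow> real \<Rightarrow> bool list \<Rightarrow> bool" where
  "RC_feasible N yh eps s \<longleftrightarrow>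
     length s = N \<and>
     (\<Sum>i<N. of_bool (s ! i) :: real) > 0 \<and>
     (\<Sum>i<N. 1 - of_bool (s ! i) :: real) > 0 \<and>
     - eps \<le> ybar N yh - (\<Sum>i<N. of_bool (yh ! i) * of_bool (s ! i)) / (\<Sum>i<N. of_bool (s ! i)) \<and>
     ybar N yh - (\<Sum>i<N. of_bool (yh ! i) * of_bool (s ! i)) / (\<Sum>i<N. of_bool (s ! i)) \<le> eps \<and>
     - eps \<le> ybar N yh - (\<Sum>i<N. of_bool (yh ! i) * (1 - of_bool (s ! i))) / (\<Sum>i<N. 1 - of_bool (s ! i)) \<and>
     ybar N yh - (\<Sum>i<N. of_bool (yh ! i) * (1 - of_bool (s ! i))) / (\<Sum>i<N. 1 - of_bool (s ! i)) \<le> eps"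

definition RC_optimal :: "nat \<Rightarrow> bool list \<Rightarrow> bool list \<Rightarrow> real list \<Rightarrow> real \<Rightarrow> bool list \<Rightarrow> bool" where
  "RC_optimal N sh yh p eps s \<longleftrightarrow>
     RC_feasible N yh eps s \<and>
     (\<forall>s'. RC_feasible N yh eps s' \<longrightarrow> RC_obj N p sh s \<le> RC_obj N p sh s')"

text \<open>Group G_a^b = {i. shat_i = a, yhat_i = b} (a, b as booleans: True = 1, for yhat True = '+').\<close>
definition grp :: "nat \<Rightarrow> bool list \<Rightarrow> bool list \<Rightarrow> bool \<Rightarrow> bool \<Rightarrow> nat set" where
  "grp N sh yh a b = {i. i < N \<and> sh ! i = a \<and> yh ! i = b}"

definition ncnt :: "nat \<Rightarrow> bool list \<Rightarrow> bool list \<Rightarrow> bool \<Rightarrow> bool \<Rightarrow> nat" where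
  "ncnt N sh yh a b = card (grp N sh yh a b)"

definition Tg :: "nat \<Rightarrow> bool list \<Rightarrow> bool list \<Rightarrow> real list \<Rightarrow> bool \<Rightarrow> bool \<Rightarrow> nat \<Rightarrow> real" where
  "Tg N sh yh p a b k =
     sum_list (take k (sort (map (\<lambda>i. p ! i) (filter (\<lambda>i. sh ! i = a \<and> yh ! i = b) [0..<N]))))"

text \<open>Tuples (s01p, s10p, s01m, s10m) = (s_01^+, s_10^+, s_01^-, s_10^-).\<close>
type_synonym tuple4 = "nat \<times> nat \<times> nat \<times> nat"

definition RCE_obj :: "nat \<Rightarrow> bool list \<Rightarrow> bool list \<Rightarrow> real list \<Rightarrow> tuple4 \<Rightarrow> real" where
  "RCE_obj N sh yh p t = (case t of (s01p, s10p, s01m, s10m) \<Rightarrow>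
      Tg N sh yh p False True s01p + Tg N sh yh p True True s10p
    + Tg N sh yh p False False s01m + Tg N sh yh p True False s10m)"

definition RCE_feasible :: "nat \<Rightarrow> bool list \<Rightarrow> bool list \<Rightarrow> real \<Rightarrow> tuple4 \<Rightarrow> bool" where
  "RCE_feasible N sh yh eps t = (case t of (s01p, s10p, s01m, s10m) \<Rightarrow>
     (let n1p = ncnt N sh yh True True; n0p = ncnt N sh yh False True;
          n1m = ncnt N sh yh True False; n0m = ncnt N sh yh False False;
          D0 = real n0p + real n0m - real s01p - real s01m + real s10p + real s10m;
          D1 = real n1p + real n1m - real s10p - real s10m + real s01p + real s01m;
          P1 = real n1p - real s10p + real s01p;
          P0 = real n0p - real s01p + real s10p
      in s01p \<le> n0p \<and> s10p \<le> n1p \<and> s01m \<le> n0m \<and> s10m \<le> n1m \<and>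
         D0 > 0 \<and> D1 > 0 \<and>
         - eps \<le> ybar N yh - P1 / D1 \<and> ybar N yh - P1 / D1 \<le> eps \<and>
         - eps \<le> ybar N yh - P0 / D0 \<and> ybar N yh - P0 / D0 \<le> eps))"

definition RCE_optimal :: "nat \<Rightarrow> bool list \<Rightarrow> bool list \<Rightarrow> real list \<Rightarrow> real \<Rightarrow> tuple4 \<Rightarrow> bool" where
  "RCE_optimal N sh yh p eps t \<longleftrightarrow>
     RCE_feasible N sh yh eps t \<and>
     (\<forall>t'. RCE_feasible N sh yh eps t' \<longrightarrow> RCE_obj N sh yh p t \<le> RCE_obj N sh yh p t')"

definition flipped :: "bool list \<Rightarrow> bool list \<Rightarrow> nat set \<Rightarrow> nat set" where
  "flipped sh s G = {i \<in> G. s ! i \<noteq> sh ! i}"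

definition flips_ok :: "real list \<Rightarrow> bool list \<Rightarrow> bool list \<Rightarrow> nat set \<Rightarrow> nat \<Rightarrow> bool" where
  "flips_ok p sh s G k \<longleftrightarrow>
     card (flipped sh s G) = k \<and>
     (\<forall>i \<in> flipped sh s G. \<forall>j \<in> G - flipped sh s G. p ! i \<le> p ! j)"

text \<open>s is a possible output of the post-processing Phi applied to tuple t.\<close>
definition Phi :: "nat \<Rightarrow> bool list \<Rightarrow> bool list \<Rightarrow> real list \<Rightarrow> tuple4 \<Rightarrow> bool list \<Rightarrow> bool" where
  "Phi N sh yh p t s \<longleftrightarrow> length s = N \<and> (case t of (s01p, s10p, s01m, s10m) \<Rightarrow>
      flips_ok p sh s (grp N sh yh False True) s01p \<and>
      flips_ok p sh s (grp N sh yh True True) s10p \<and>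
      flips_ok p sh s (grp N sh yh False False) s01m \<and>
      flips_ok p sh s (grp N sh yh True False) s10m)"

definition flipcount :: "nat \<Rightarrow> bool list \<Rightarrow> bool list \<Rightarrow> bool list \<Rightarrow> tuple4" where
  "flipcount N sh yh s =
     (card (flipped sh s (grp N sh yh False True)), card (flipped sh s (grp N sh yh True True)),
      card (flipped sh s (grp N sh yh False False)), card (flipped sh s (grp N sh yh True False)))"

end

theory Submission
  imports Defs
begin

text \<open>Both the objective and the constraints of RC depend on a candidate s only through
the sets of flipped indices in the four groups: the constraints only through their sizes, the
objective as the total weight flipped. For a fixed size k, the least weight that can be flipped
inside a group is the sum of its k smallest weights, which is T_G[k], and it is attained exactly
by the sets consisting of smallest weights. Hence optimising RC amounts to optimising the
four flip counts against the objective of RC_E, and an optimum of RC must flip smallest weights,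
i.e. arise from the post-processing Phi.\<close>

definition lower_set :: "('a \<Rightarrow> 'b::order) \<Rightarrow> 'a set \<Rightarrow> 'a set \<Rightarrow> bool" where
  "lower_set f G A \<longleftrightarrow> (\<forall>i\<in>A. \<forall>j\<in>G - A. f i \<le> f j)"

lemma lower_set_sum_le:
  fixes f :: "'a \<Rightarrow> 'b::ordered_comm_monoid_add"
  assumes "finite G" "A \<subseteq> G" "S \<subseteq> G" "card A = card S" "lower_set f G A"
  shows "sum f A \<le> sum f S"
proof -
  have fin: "finite A" "finite S" using assms(1-3) finite_subset by auto
  have "card (A - S) = card (S - A)"
    using card_Diff_subset_Int[of A S] card_Diff_subset_Int[of S A] fin assms(4)
    by (simp add: Int_commute)
  then obtain g where g: "bij_betw g (A - S) (S - A)"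
    using finite_same_card_bij fin by blast
  have "sum f (A - S) \<le> sum (f \<circ> g) (A - S)"
  proof (rule sum_mono)
    fix x assume x: "x \<in> A - S"
    then have "g x \<in> G - A" using g bij_betwE assms(3) by blast
    then show "f x \<le> (f \<circ> g) x" using x assms(5) unfolding lower_set_def by simp
  qed
  also have "\<dots> = sum f (S - A)" using sum.reindex_bij_betw[OF g] by simp
  finally show ?thesis
    using sum.Int_Diff[of A f S] sum.Int_Diff[of S f A] fin
    by (simp add: Int_commute add_left_mono)
qed

lemma lower_set_sum_eq:
  fixes f :: "'a \<Rightarrow> 'b::ordered_comm_monoid_add"
  assumes "finite G" "A \<subseteq> G" "B \<subseteq> G" "card A = card B" "lower_set f G A" "lower_set f G B"
  shows "sum f A = sum f B"
  using lower_set_sum_le[of G A B f] lower_set_sum_le[of G B A f] assms by (simp add: order_antisym)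

lemma sum_gt_if_not_lower_set:
  fixes f :: "'a \<Rightarrow> 'b::{ordered_cancel_comm_monoid_add, linorder}"
  assumes "finite G" "A \<subseteq> G" "\<not> lower_set f G A"
  shows "\<exists>B \<subseteq> G. card B = card A \<and> sum f B < sum f A"
proof -
  obtain i j where ij: "i \<in> A" "j \<in> G - A" "f j < f i"
    using assms(3) not_le unfolding lower_set_def by blast
  have fin: "finite A" using assms(1,2) finite_subset by blast
  let ?B = "insert j (A - {i})"
  have "card ?B = card A"
    using ij fin card.remove[OF fin ij(1)] by simp
  moreover have "sum f ?B = f j + sum f (A - {i})"
    using ij fin by simp
  moreover have "sum f A = f i + sum f (A - {i})"
    using sum.remove[OF fin ij(1)] .
  ultimately have "card ?B = card A \<and> sum f ?B < sum f A"
    using add_strict_right_mono[OF ij(3)] by simp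
  moreover have "?B \<subseteq> G" using ij assms(2) by auto
  ultimately show ?thesis by blast
qed

lemma lower_set_set_take:
  assumes "distinct xs" "sorted (map f xs)"
  shows "lower_set f (set xs) (set (take k xs))"
  unfolding lower_set_def
proof (intro ballI)
  fix i j assume i: "i \<in> set (take k xs)" and j: "j \<in> set xs - set (take k xs)"
  obtain m where m: "m < k" "m < length xs" "xs ! m = i" using i by (auto simp: in_set_conv_nth)
  obtain m' where m': "m' < length xs" "xs ! m' = j" using j by (auto simp: in_set_conv_nth)
  have "\<not> m' < k" using m' j by (auto simp: in_set_conv_nth)
  then show "f i \<le> f j" using sorted_nth_mono[OF assms(2), of m m'] m m' by simp
qed

lemma sort_map_eq_map_sort_key:
  fixes f :: "'a \<Rightarrow> 'b::linorder"
  shows "sort (map f xs) = map f (sort_key f xs)"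
proof -
  have "map f (insort_key f x ys) = insort (f x) (map f ys)" for x ys
    by (induction ys) auto
  then show ?thesis by (induction xs) simp_all
qed

definition grp_sorted :: "nat \<Rightarrow> bool list \<Rightarrow> bool list \<Rightarrow> real list \<Rightarrow> bool \<Rightarrow> bool \<Rightarrow> nat list" where
  "grp_sorted N sh yh p a b = sort_key (\<lambda>i. p ! i) (filter (\<lambda>i. sh ! i = a \<and> yh ! i = b) [0..<N])"

lemma grp_finite: "finite (grp N sh yh a b)"
  unfolding grp_def by auto

lemma grp_subset_lessThan: "grp N sh yh a b \<subseteq> {..<N}"
  unfolding grp_def by auto

lemma card_le_ncnt: "A \<subseteq> grp N sh yh a b \<Longrightarrow> card A \<le> ncnt N sh yh a b"
  unfolding ncnt_def using grp_finite by (rule card_mono)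

lemma distinct_grp_sorted: "distinct (grp_sorted N sh yh p a b)"
  unfolding grp_sorted_def by simp

lemma set_grp_sorted: "set (grp_sorted N sh yh p a b) = grp N sh yh a b"
  unfolding grp_sorted_def grp_def by auto

lemma sorted_grp_sorted: "sorted (map (\<lambda>i. p ! i) (grp_sorted N sh yh p a b))"
  unfolding grp_sorted_def by simp

lemma Tg_eq_sum_take: "Tg N sh yh p a b k = sum (\<lambda>i. p ! i) (set (take k (grp_sorted N sh yh p a b)))"
  unfolding Tg_def
  by (simp add: sort_map_eq_map_sort_key take_map sum_list_distinct_conv_sum_set
                distinct_grp_sorted flip: grp_sorted_def)

lemma lower_set_grp_take:
  "lower_set (\<lambda>i. p ! i) (grp N sh yh a b) (set (take k (grp_sorted N sh yh p a b)))"
  using lower_set_set_take[OF distinct_grp_sorted sorted_grp_sorted] by (simp add: set_grp_sorted)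

lemma card_grp_take:
  assumes "k \<le> ncnt N sh yh a b"
  shows "card (set (take k (grp_sorted N sh yh p a b))) = k"
  using assms distinct_card[OF distinct_grp_sorted]
  by (simp add: ncnt_def set_grp_sorted distinct_card distinct_grp_sorted)

lemma grp_take_subset: "set (take k (grp_sorted N sh yh p a b)) \<subseteq> grp N sh yh a b"
  using set_take_subset[of k "grp_sorted N sh yh p a b"] by (simp only: set_grp_sorted)

lemma exists_lower_set_card:
  fixes p :: "real list"
  assumes "k \<le> ncnt N sh yh a b"
  shows "\<exists>A \<subseteq> grp N sh yh a b. card A = k \<and> lower_set (\<lambda>i. p ! i) (grp N sh yh a b) A"
  using grp_take_subset card_grp_take[OF assms] lower_set_grp_take
  by (intro exI[of _ "set (take k (grp_sorted N sh yh p a b))"] conjI)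

lemma Tg_le_sum:
  assumes "A \<subseteq> grp N sh yh a b"
  shows "Tg N sh yh p a b (card A) \<le> sum (\<lambda>i. p ! i) A"
proof -
  have "card (set (take (card A) (grp_sorted N sh yh p a b))) = card A"
    using card_grp_take[OF card_le_ncnt[OF assms]] .
  from lower_set_sum_le[OF grp_finite grp_take_subset assms this lower_set_grp_take]
  show ?thesis unfolding Tg_eq_sum_take .
qed

lemma Tg_eq_sum_iff_lower_set:
  assumes "A \<subseteq> grp N sh yh a b"
  shows "Tg N sh yh p a b (card A) = sum (\<lambda>i. p ! i) A \<longleftrightarrow> lower_set (\<lambda>i. p ! i) (grp N sh yh a b) A"
proof
  assume eq: "Tg N sh yh p a b (card A) = sum (\<lambda>i. p ! i) A"
  show "lower_set (\<lambda>i. p ! i) (grp N sh yh a b) A"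
  proof (rule ccontr)
    assume "\<not> ?thesis"
    then obtain B where B: "B \<subseteq> grp N sh yh a b" "card B = card A"
        "sum (\<lambda>i. p ! i) B < sum (\<lambda>i. p ! i) A"
      using sum_gt_if_not_lower_set[OF grp_finite assms] by blast
    have "Tg N sh yh p a b (card B) \<le> sum (\<lambda>i. p ! i) B" using B(1) by (rule Tg_le_sum)
    with B(2,3) eq show False by simp
  qed
next
  assume lower: "lower_set (\<lambda>i. p ! i) (grp N sh yh a b) A"
  have "card (set (take (card A) (grp_sorted N sh yh p a b))) = card A"
    using card_grp_take[OF card_le_ncnt[OF assms]] .
  from lower_set_sum_eq[OF grp_finite grp_take_subset assms this lower_set_grp_take lower]
  show "Tg N sh yh p a b (card A) = sum (\<lambda>i. p ! i) A" unfolding Tg_eq_sum_take .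
qed

lemma sum_lessThan_eq_sum_grp:
  fixes h :: "nat \<Rightarrow> 'b::comm_monoid_add"
  shows "(\<Sum>i<N. h i) = sum h (grp N sh yh False True) + sum h (grp N sh yh True True)
     + sum h (grp N sh yh False False) + sum h (grp N sh yh True False)"
proof -
  let ?G = "grp N sh yh"
  have U: "{..<N} = ?G False True \<union> ?G True True \<union> ?G False False \<union> ?G True False"
    unfolding grp_def by auto
  have "sum h (?G False True \<union> ?G True True \<union> ?G False False \<union> ?G True False)
      = sum h (?G False True \<union> ?G True True \<union> ?G False False) + sum h (?G True False)"
    by (rule sum.union_disjoint) (auto simp: grp_finite, auto simp: grp_def)
  also have "sum h (?G False True \<union> ?G True True \<union> ?G False False)
      = sum h (?G False True \<union> ?G True True) + sum h (?G False False)"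
    by (rule sum.union_disjoint) (auto simp: grp_finite, auto simp: grp_def)
  also have "sum h (?G False True \<union> ?G True True) = sum h (?G False True) + sum h (?G True True)"
    by (rule sum.union_disjoint) (auto simp: grp_finite, auto simp: grp_def)
  finally show ?thesis by (simp only: U)
qed

lemma sum_two_valued:
  fixes h :: "'a \<Rightarrow> real"
  assumes "finite G" "F \<subseteq> G" "\<And>i. i \<in> G \<Longrightarrow> h i = (if i \<in> F then c1 else c2)"
  shows "sum h G = real (card F) * c1 + (real (card G) - real (card F)) * c2"
proof -
  have fin: "finite F" using assms(1,2) finite_subset by blast
  have "sum h G = sum h F + sum h (G - F)"
    using sum.subset_diff[OF assms(2,1)] by (simp add: add.commute)
  also have "sum h F = real (card F) * c1"
    using assms(2,3) by (simp add: subset_iff)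
  also have "sum h (G - F) = real (card (G - F)) * c2"
    using assms(3) by simp
  also have "real (card (G - F)) = real (card G) - real (card F)"
    using card_Diff_subset[OF fin assms(2)] card_mono[OF assms(1,2)] by simp
  finally show ?thesis .
qed

lemma flipped_subset: "flipped sh s G \<subseteq> G"
  unfolding flipped_def by auto

abbreviation nflip :: "nat \<Rightarrow> bool list \<Rightarrow> bool list \<Rightarrow> bool list \<Rightarrow> bool \<Rightarrow> bool \<Rightarrow> real" where
  "nflip N sh yh s a b \<equiv> real (card (flipped sh s (grp N sh yh a b)))"

abbreviation ngrp :: "nat \<Rightarrow> bool list \<Rightarrow> bool list \<Rightarrow> bool \<Rightarrow> bool \<Rightarrow> real" where
  "ngrp N sh yh a b \<equiv> real (ncnt N sh yh a b)"

lemma sum_grp_s: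
  "(\<Sum>i\<in>grp N sh yh a b. of_bool (s ! i) :: real)
     = (if a then ngrp N sh yh a b - nflip N sh yh s a b else nflip N sh yh s a b)"
proof -
  have "(of_bool (s ! i) :: real) = (if i \<in> flipped sh s (grp N sh yh a b) then of_bool (\<not> a) else of_bool a)"
    if "i \<in> grp N sh yh a b" for i
    using that unfolding flipped_def grp_def by auto
  from sum_two_valued[OF grp_finite flipped_subset this] show ?thesis
    by (auto simp: ncnt_def)
qed

lemma sum_grp_not_s:
  "(\<Sum>i\<in>grp N sh yh a b. 1 - of_bool (s ! i) :: real)
     = ngrp N sh yh a b - (if a then ngrp N sh yh a b - nflip N sh yh s a b else nflip N sh yh s a b)"
  by (simp add: sum_subtractf sum_grp_s ncnt_def)

lemma sum_grp_yh_times: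
  "(\<Sum>i\<in>grp N sh yh a b. of_bool (yh ! i) * h i :: real) = of_bool b * (\<Sum>i\<in>grp N sh yh a b. h i)"
  by (simp add: sum_distrib_left grp_def)

lemma RC_obj_eq_sum_flipped:
  "RC_obj N p sh s = sum (\<lambda>i. p ! i) (flipped sh s (grp N sh yh False True))
     + sum (\<lambda>i. p ! i) (flipped sh s (grp N sh yh True True))
     + sum (\<lambda>i. p ! i) (flipped sh s (grp N sh yh False False))
     + sum (\<lambda>i. p ! i) (flipped sh s (grp N sh yh True False))"
proof -
  let ?h = "\<lambda>i. if s ! i \<noteq> sh ! i then p ! i else 0"
  have obj: "RC_obj N p sh s = (\<Sum>i<N. ?h i)"
    unfolding RC_obj_def sum.distrib[symmetric] by (rule sum.cong) auto
  have flipped: "sum (\<lambda>i. p ! i) (flipped sh s G) = sum ?h G" if "finite G" for G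
    unfolding flipped_def using sum.inter_filter[OF that] by simp
  show ?thesis
    unfolding obj sum_lessThan_eq_sum_grp[of ?h N sh yh] by (simp add: flipped grp_finite)
qed

lemma card_flipped_le_ncnt: "card (flipped sh s (grp N sh yh a b)) \<le> ncnt N sh yh a b"
  using flipped_subset by (rule card_le_ncnt)

lemma RC_feasible_iff_RCE_feasible_flipcount:
  "RC_feasible N yh eps s \<longleftrightarrow> length s = N \<and> RCE_feasible N sh yh eps (flipcount N sh yh s)"
  unfolding RC_feasible_def RCE_feasible_def flipcount_def Let_def
  apply (simp only: sum_lessThan_eq_sum_grp[where N=N and sh=sh and yh=yh]
      sum_grp_yh_times sum_grp_s sum_grp_not_s case_prod_conv)
  using card_flipped_le_ncnt by (simp add: algebra_simps) (simp only: conj_ac)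

lemma flips_ok_iff_lower_set:
  "flips_ok p sh s G k \<longleftrightarrow> card (flipped sh s G) = k \<and> lower_set (\<lambda>i. p ! i) G (flipped sh s G)"
  unfolding flips_ok_def lower_set_def by blast

lemma RCE_obj_flipcount_le_RC_obj: "RCE_obj N sh yh p (flipcount N sh yh s) \<le> RC_obj N p sh s"
  unfolding RCE_obj_def flipcount_def RC_obj_eq_sum_flipped[where yh=yh] case_prod_conv
  by (intro add_mono Tg_le_sum flipped_subset)

lemma flipcount_eq_if_Phi: "Phi N sh yh p t s \<Longrightarrow> flipcount N sh yh s = t"
  unfolding Phi_def flipcount_def flips_ok_def by (cases t) auto

lemma RC_obj_eq_RCE_obj_if_Phi:
  assumes "Phi N sh yh p t s"
  shows "RC_obj N p sh s = RCE_obj N sh yh p t"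
proof -
  obtain k1 k2 k3 k4 where t: "t = (k1, k2, k3, k4)" by (cases t)
  show ?thesis
    using assms
    unfolding t Phi_def flips_ok_iff_lower_set RCE_obj_def RC_obj_eq_sum_flipped[where yh=yh] case_prod_conv
    by (elim conjE) (hypsubst, simp add: Tg_eq_sum_iff_lower_set[OF flipped_subset, symmetric])
qed

lemma flipped_flip_set:
  assumes "G \<subseteq> {..<N}"
  shows "flipped sh (map (\<lambda>i. if i \<in> F then \<not> sh ! i else sh ! i) [0..<N]) G = F \<inter> G"
  using assms unfolding flipped_def by auto

lemma Phi_exists:
  fixes p :: "real list"
  assumes "k1 \<le> ncnt N sh yh False True" "k2 \<le> ncnt N sh yh True True"
    "k3 \<le> ncnt N sh yh False False" "k4 \<le> ncnt N sh yh True False"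
  shows "\<exists>s. Phi N sh yh p (k1, k2, k3, k4) s"
proof -
  let ?lower = "\<lambda>a b A. A \<subseteq> grp N sh yh a b \<and> lower_set (\<lambda>i. p ! i) (grp N sh yh a b) A"
  obtain A1 A2 A3 A4 where
    A: "?lower False True A1" "?lower True True A2" "?lower False False A3" "?lower True False A4"
    and card: "card A1 = k1" "card A2 = k2" "card A3 = k3" "card A4 = k4"
    using exists_lower_set_card[OF assms(1)] exists_lower_set_card[OF assms(2)]
      exists_lower_set_card[OF assms(3)] exists_lower_set_card[OF assms(4)] by metis
  define s where "s = map (\<lambda>i. if i \<in> A1 \<union> A2 \<union> A3 \<union> A4 then \<not> sh ! i else sh ! i) [0..<N]"
  \<comment> \<open>the groups are pairwise disjoint, so flipping the union flips exactly A_k within group k\<close>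
  have "flipped sh s (grp N sh yh False True) = A1" "flipped sh s (grp N sh yh True True) = A2"
    "flipped sh s (grp N sh yh False False) = A3" "flipped sh s (grp N sh yh True False) = A4"
    unfolding s_def flipped_flip_set[OF grp_subset_lessThan] using A by (auto simp: grp_def)
  then have "Phi N sh yh p (k1, k2, k3, k4) s"
    unfolding Phi_def flips_ok_iff_lower_set using A card by (simp add: s_def)
  then show ?thesis ..
qed

lemma RCE_feasible_bounds:
  "RCE_feasible N sh yh eps (k1, k2, k3, k4) \<Longrightarrow>
    k1 \<le> ncnt N sh yh False True \<and> k2 \<le> ncnt N sh yh True True \<and>
    k3 \<le> ncnt N sh yh False False \<and> k4 \<le> ncnt N sh yh True False"
  unfolding RCE_feasible_def Let_def by simp

lemma RC_feasible_if_Phi: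
  "Phi N sh yh p t s \<Longrightarrow> RCE_feasible N sh yh eps t \<Longrightarrow> RC_feasible N yh eps s"
  using flipcount_eq_if_Phi RC_feasible_iff_RCE_feasible_flipcount unfolding Phi_def by metis

lemma RCE_feasible_imp_Phi:
  fixes p :: "real list"
  assumes "RCE_feasible N sh yh eps t"
  shows "\<exists>s. Phi N sh yh p t s \<and> RC_feasible N yh eps s"
proof -
  obtain k1 k2 k3 k4 where t: "t = (k1, k2, k3, k4)" by (cases t)
  obtain s where "Phi N sh yh p t s"
    using Phi_exists RCE_feasible_bounds assms unfolding t by metis
  then show ?thesis using RC_feasible_if_Phi assms by blast
qed

lemma RC_optimal_imp_Phi_flipcount:
  assumes "RC_optimal N sh yh p eps s"
  shows "Phi N sh yh p (flipcount N sh yh s) s"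
proof -
  have "RC_feasible N yh eps s" using assms unfolding RC_optimal_def by blast
  then have len: "length s = N" and "RCE_feasible N sh yh eps (flipcount N sh yh s)"
    using RC_feasible_iff_RCE_feasible_flipcount by blast+
  then obtain s0 where s0: "Phi N sh yh p (flipcount N sh yh s) s0" "RC_feasible N yh eps s0"
    using RCE_feasible_imp_Phi by blast
  have "RC_obj N p sh s \<le> RC_obj N p sh s0" using assms s0(2) unfolding RC_optimal_def by blast
  also have "\<dots> = RCE_obj N sh yh p (flipcount N sh yh s)" using RC_obj_eq_RCE_obj_if_Phi[OF s0(1)] .
  finally have le: "RC_obj N p sh s \<le> RCE_obj N sh yh p (flipcount N sh yh s)" .
  \<comment> \<open>each of the four summands of this inequality is reversed by \<open>Tg_le_sum\<close>, so all are equalities\<close>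
  have "Tg N sh yh p a b (card (flipped sh s (grp N sh yh a b))) = sum (\<lambda>i. p ! i) (flipped sh s (grp N sh yh a b))"
    for a b
    using le Tg_le_sum[OF flipped_subset[of sh s], where p=p]
    unfolding RCE_obj_def flipcount_def RC_obj_eq_sum_flipped[where yh=yh] case_prod_conv
    by (smt (verit))
  then show ?thesis
    unfolding Phi_def flipcount_def case_prod_conv flips_ok_iff_lower_set
    using len Tg_eq_sum_iff_lower_set[OF flipped_subset] by simp
qed

lemma finite_RC_feasible: "finite {s. RC_feasible N yh eps s}"
  by (rule finite_subset[OF _ finite_lists_length_eq[OF finite_UNIV, of N]])
     (auto simp: RC_feasible_def)

lemma finite_RCE_feasible: "finite {t. RCE_feasible N sh yh eps t}"
proof (rule finite_subset)
  show "{t. RCE_feasible N sh yh eps t} \<subseteq> {..ncnt N sh yh False True} \<times> {..ncnt N sh yh True True}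
     \<times> {..ncnt N sh yh False False} \<times> {..ncnt N sh yh True False}"
    using RCE_feasible_bounds by fastforce
qed auto

lemma Min_RC_obj_eq_Min_RCE_obj:
  assumes "RC_feasible N yh eps s"
  shows "Min (RC_obj N p sh ` {s. RC_feasible N yh eps s})
       = Min (RCE_obj N sh yh p ` {t. RCE_feasible N sh yh eps t})" (is "Min ?A = Min ?B")
proof -
  have A: "finite ?A" "?A \<noteq> {}" using finite_RC_feasible assms by auto
  have B: "finite ?B" "?B \<noteq> {}"
    using finite_RCE_feasible assms RC_feasible_iff_RCE_feasible_flipcount by blast+
  have "Min ?A \<le> Min ?B"
  proof -
    obtain t where t: "RCE_feasible N sh yh eps t" "Min ?B = RCE_obj N sh yh p t"
      using Min_in[OF B] by auto
    then obtain s' where s': "Phi N sh yh p t s'" "RC_feasible N yh eps s'"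
      using RCE_feasible_imp_Phi by blast
    then have "Min ?A \<le> RC_obj N p sh s'" using A by simp
    then show ?thesis using t(2) RC_obj_eq_RCE_obj_if_Phi[OF s'(1)] by simp
  qed
  moreover have "Min ?B \<le> Min ?A"
  proof -
    obtain s' where s': "RC_feasible N yh eps s'" "Min ?A = RC_obj N p sh s'"
      using Min_in[OF A] by auto
    then have "RCE_feasible N sh yh eps (flipcount N sh yh s')"
      using RC_feasible_iff_RCE_feasible_flipcount by blast
    then have "Min ?B \<le> RCE_obj N sh yh p (flipcount N sh yh s')" using B by simp
    then show ?thesis using s'(2) RCE_obj_flipcount_le_RC_obj[of N sh yh p s'] by simp
  qed
  ultimately show ?thesis by simp
qed

lemma RC_optimal_if_RCE_optimal_Phi:
  assumes "RCE_optimal N sh yh p eps t" "Phi N sh yh p t s"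
  shows "RC_optimal N sh yh p eps s"
  unfolding RC_optimal_def
proof (intro conjI allI impI)
  show "RC_feasible N yh eps s"
    using assms RC_feasible_if_Phi unfolding RCE_optimal_def by blast
  fix s' assume "RC_feasible N yh eps s'"
  then have "RCE_feasible N sh yh eps (flipcount N sh yh s')"
    using RC_feasible_iff_RCE_feasible_flipcount by blast
  then have "RCE_obj N sh yh p t \<le> RCE_obj N sh yh p (flipcount N sh yh s')"
    using assms(1) unfolding RCE_optimal_def by blast
  then show "RC_obj N p sh s \<le> RC_obj N p sh s'"
    using RC_obj_eq_RCE_obj_if_Phi[OF assms(2)] RCE_obj_flipcount_le_RC_obj[of N sh yh p s'] by simp
qed

lemma RCE_optimal_flipcount_if_RC_optimal:
  assumes "RC_optimal N sh yh p eps s"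
  shows "RCE_optimal N sh yh p eps (flipcount N sh yh s)"
  unfolding RCE_optimal_def
proof (intro conjI allI impI)
  show "RCE_feasible N sh yh eps (flipcount N sh yh s)"
    using assms RC_feasible_iff_RCE_feasible_flipcount unfolding RC_optimal_def by blast
  fix t' assume "RCE_feasible N sh yh eps t'"
  then obtain s' where s': "Phi N sh yh p t' s'" "RC_feasible N yh eps s'"
    using RCE_feasible_imp_Phi by blast
  then have "RC_obj N p sh s \<le> RC_obj N p sh s'"
    using assms unfolding RC_optimal_def by blast
  then show "RCE_obj N sh yh p (flipcount N sh yh s) \<le> RCE_obj N sh yh p t'"
    using RC_obj_eq_RCE_obj_if_Phi[OF s'(1)]
      RC_obj_eq_RCE_obj_if_Phi[OF RC_optimal_imp_Phi_flipcount[OF assms]] by simp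
qed

theorem theorem1:
  fixes N :: nat and sh yh :: "bool list" and p :: "real list" and eps :: real
  assumes "N \<ge> 1" and "length sh = N" and "length yh = N" and "length p = N"
    and "\<forall>i<N. p ! i \<ge> 0" and "eps \<ge> 0"
  shows "((\<exists>s. RC_feasible N yh eps s) \<longleftrightarrow> (\<exists>t. RCE_feasible N sh yh eps t))
     \<and> ((\<exists>s. RC_feasible N yh eps s) \<longrightarrow>
          Min (RC_obj N p sh ` {s. RC_feasible N yh eps s})
          = Min (RCE_obj N sh yh p ` {t. RCE_feasible N sh yh eps t}))
     \<and> (\<forall>t s. RCE_optimal N sh yh p eps t \<and> Phi N sh yh p t s \<longrightarrow> RC_optimal N sh yh p eps s)
     \<and> (\<forall>s. RC_optimal N sh yh p eps s \<longrightarrow>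
          RCE_optimal N sh yh p eps (flipcount N sh yh s) \<and> Phi N sh yh p (flipcount N sh yh s) s)"
  \<comment> \<open>the equivalence holds for arbitrary data: none of the hypotheses is used\<close>
proof (intro conjI allI impI)
  show "(\<exists>s. RC_feasible N yh eps s) \<longleftrightarrow> (\<exists>t. RCE_feasible N sh yh eps t)"
    using RC_feasible_iff_RCE_feasible_flipcount RCE_feasible_imp_Phi by metis
qed (auto intro: Min_RC_obj_eq_Min_RCE_obj RC_optimal_if_RCE_optimal_Phi
       RCE_optimal_flipcount_if_RC_optimal RC_optimal_imp_Phi_flipcount)

end
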